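(* Let $\mu$ be a log-concave probability measure on $\mathbb{R}$ with density $f$, and let $M=\|f\|_\infty$. Then $$\Gamma(\mu)=2M.$$
   Context: A probability measure on $\mathbb{R}$ is log-concave if it has a density $f$ with $\ln f$ concave. For an interval $I=[a,b]$, $\mu^+(\partial I)=\liminf_{\epsilon\to0^+}\frac{\mu([a-\epsilon,b+\epsilon])-\mu([a,b])}{\epsilon}$, and $\Gamma(\mu)=\sup\{\mu^+(\partial I): I=[a,b]\subset\mathbb{R},\ a<b\}$. *)

theory Defs
  imports "HOL-Probability.Probability"
begin

(* ln f concave, with the convention ln 0 = -infinity: the support {f > 0}
   is convex and ln o f is concave on it. *)
definition log_concave_fun :: "(real \<Rightarrow> real) \<Rightarrow> bool" where
  "log_concave_fun f \<longleftrightarrow> (\<forall>x. f x \<ge> 0) \<and> convex {x. f x > 0} \<and>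
      concave_on {x. f x > 0} (\<lambda>x. ln (f x))"

definition log_concave_prob_with_density :: "real measure \<Rightarrow> (real \<Rightarrow> real) \<Rightarrow> bool" where
  "log_concave_prob_with_density \<mu> f \<longleftrightarrow>
     prob_space \<mu> \<and> f \<in> borel_measurable borel \<and> log_concave_fun f \<and>
     \<mu> = density lborel (\<lambda>x. ennreal (f x))"

definition boundary_measure :: "real measure \<Rightarrow> real \<Rightarrow> real \<Rightarrow> ereal" where
  "boundary_measure \<mu> a b =
     Liminf (at_right 0) (\<lambda>\<epsilon>. ereal ((measure \<mu> {a-\<epsilon>..b+\<epsilon>} - measure \<mu> {a..b}) / \<epsilon>))"

definition Gamma_measure :: "real measure \<Rightarrow> ereal" where
  "Gamma_measure \<mu> = (SUP ab \<in> {(a,b). a < b}. boundary_measure \<mu> (fst ab) (snd ab))"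

end

theory Submission
  imports Defs
begin

text \<open>
  The difference quotient defining \<open>\<mu>\<^sup>+(\<partial>[a,b])\<close> is the \<open>\<mu>\<close>-mass of the two collars
  \<open>[a-\<epsilon>,a)\<close> and \<open>(b,b+\<epsilon>]\<close> divided by \<open>\<epsilon>\<close>. As \<open>f \<le> M\<close> almost everywhere, each collar
  has mass at most \<open>M\<epsilon>\<close>, so \<open>\<Gamma>(\<mu>) \<le> 2M\<close>. Conversely, for \<open>0 < c < M\<close> the superlevel
  set \<open>{f > c}\<close> has positive Lebesgue measure and is convex because \<open>ln f\<close> is concave, so it
  contains an interval \<open>[x,y]\<close>; if \<open>[a,b]\<close> is the middle third of \<open>[x,y]\<close>, both collars
  eventually lie in \<open>{f > c}\<close>, whence \<open>\<mu>\<^sup>+(\<partial>[a,b]) \<ge> 2c\<close>.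
\<close>

lemma measure_density_le_mult:
  fixes f :: "'a \<Rightarrow> real"
  assumes "f \<in> borel_measurable N" "AE x in N. f x \<le> M" "0 \<le> M"
    and "A \<in> sets N" "emeasure N A < \<infinity>"
  shows "measure (density N (\<lambda>x. ennreal (f x))) A \<le> M * measure N A"
proof -
  have "emeasure (density N (\<lambda>x. ennreal (f x))) A = (\<integral>\<^sup>+ x. ennreal (f x) * indicator A x \<partial>N)"
    using assms(1,4) by (subst emeasure_density) auto
  also have "\<dots> \<le> (\<integral>\<^sup>+ x. ennreal M * indicator A x \<partial>N)"
    using assms(2) by (intro nn_integral_mono_AE)
      (auto split: split_indicator intro: ennreal_leI elim!: eventually_mono)
  also have "\<dots> = ennreal M * emeasure N A"
    using assms(4) by (subst nn_integral_cmult_indicator) auto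
  finally have "emeasure (density N (\<lambda>x. ennreal (f x))) A \<le> ennreal M * emeasure N A" .
  then have "measure (density N (\<lambda>x. ennreal (f x))) A \<le> enn2real (ennreal M * emeasure N A)"
    unfolding measure_def using assms(5) by (intro enn2real_mono) (auto simp: ennreal_mult_less_top)
  then show ?thesis
    using assms(3) by (simp add: enn2real_mult measure_def)
qed

lemma measure_density_ge_mult:
  fixes f :: "'a \<Rightarrow> real"
  assumes "f \<in> borel_measurable N" "\<And>x. x \<in> A \<Longrightarrow> c \<le> f x" "0 \<le> c"
    and "A \<in> sets N" "emeasure (density N (\<lambda>x. ennreal (f x))) A < \<infinity>"
  shows "c * measure N A \<le> measure (density N (\<lambda>x. ennreal (f x))) A"
proof -
  have "ennreal c * emeasure N A = (\<integral>\<^sup>+ x. ennreal c * indicator A x \<partial>N)"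
    using assms(4) by (subst nn_integral_cmult_indicator) auto
  also have "\<dots> \<le> (\<integral>\<^sup>+ x. ennreal (f x) * indicator A x \<partial>N)"
    using assms(2) by (intro nn_integral_mono) (auto split: split_indicator intro: ennreal_leI)
  also have "\<dots> = emeasure (density N (\<lambda>x. ennreal (f x))) A"
    using assms(1,4) by (subst emeasure_density) auto
  finally have "enn2real (ennreal c * emeasure N A) \<le> measure (density N (\<lambda>x. ennreal (f x))) A"
    unfolding measure_def using assms(5) by (intro enn2real_mono) auto
  then show ?thesis
    using assms(3) by (simp add: enn2real_mult measure_def)
qed

lemma measure_Icc_enlarge_eq_collars:
  fixes a b e :: real
  assumes "finite_measure \<mu>" "sets \<mu> = sets borel" "a \<le> b" "0 < e"
  shows "measure \<mu> {a-e..b+e} - measure \<mu> {a..b} = measure \<mu> {a-e..<a} + measure \<mu> {b<..b+e}"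
proof -
  have split: "{a-e..b+e} = ({a-e..<a} \<union> {a..b}) \<union> {b<..b+e}"
    using assms(3,4) by auto
  have "measure \<mu> {a-e..b+e} = measure \<mu> ({a-e..<a} \<union> {a..b}) + measure \<mu> {b<..b+e}"
    unfolding split using assms(2,3) by (intro finite_measure.finite_measure_Union[OF assms(1)]) auto
  also have "measure \<mu> ({a-e..<a} \<union> {a..b}) = measure \<mu> {a-e..<a} + measure \<mu> {a..b}"
    using assms(2) by (intro finite_measure.finite_measure_Union[OF assms(1)]) auto
  finally show ?thesis by simp
qed

lemma boundary_measure_nonneg:
  assumes "finite_measure \<mu>" "sets \<mu> = sets borel" "a \<le> b"
  shows "0 \<le> boundary_measure \<mu> a b"
  unfolding boundary_measure_def
proof (intro Liminf_bounded eventually_at_rightI[of 0 1])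
  fix e :: real assume "e \<in> {0<..<1}"
  then show "0 \<le> ereal ((measure \<mu> {a-e..b+e} - measure \<mu> {a..b}) / e)"
    using measure_Icc_enlarge_eq_collars[OF assms, of e] by simp
qed simp

lemma boundary_measure_density_le:
  fixes f :: "real \<Rightarrow> real"
  assumes "finite_measure (density lborel (\<lambda>x. ennreal (f x)))" "f \<in> borel_measurable borel"
    and "AE x in lborel. f x \<le> M" "0 \<le> M" "a \<le> b"
  shows "boundary_measure (density lborel (\<lambda>x. ennreal (f x))) a b \<le> ereal (2 * M)"
proof -
  let ?\<mu> = "density lborel (\<lambda>x. ennreal (f x))"
  have f: "f \<in> borel_measurable lborel"
    using assms(2) by simp
  have "(measure ?\<mu> {a-e..b+e} - measure ?\<mu> {a..b}) / e \<le> 2 * M" if "0 < e" for e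
  proof -
    have "measure ?\<mu> {a-e..<a} \<le> M * measure lborel {a-e..<a}"
      "measure ?\<mu> {b<..b+e} \<le> M * measure lborel {b<..b+e}"
      by (auto intro!: measure_density_le_mult[OF f assms(3,4)] emeasure_bounded_finite)
    then have "measure ?\<mu> {a-e..<a} \<le> M * e" "measure ?\<mu> {b<..b+e} \<le> M * e"
      using \<open>0 < e\<close> by simp_all
    then show ?thesis
      using measure_Icc_enlarge_eq_collars[OF assms(1) _ assms(5) \<open>0 < e\<close>] \<open>0 < e\<close>
      by (simp add: divide_le_eq)
  qed
  then have "Limsup (at_right 0) (\<lambda>e. ereal ((measure ?\<mu> {a-e..b+e} - measure ?\<mu> {a..b}) / e))
      \<le> 2 * M"
    by (intro Limsup_bounded eventually_at_rightI[of 0 1]) auto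
  then show ?thesis
    unfolding boundary_measure_def by (rule order_trans[OF Liminf_le_Limsup, rotated]) simp
qed

lemma boundary_measure_density_ge:
  fixes f :: "real \<Rightarrow> real"
  assumes "finite_measure (density lborel (\<lambda>x. ennreal (f x)))" "f \<in> borel_measurable borel"
    and "\<And>x. x \<in> {a-d..b+d} \<Longrightarrow> c \<le> f x" "0 \<le> c" "0 < d" "a \<le> b"
  shows "ereal (2 * c) \<le> boundary_measure (density lborel (\<lambda>x. ennreal (f x))) a b"
proof -
  let ?\<mu> = "density lborel (\<lambda>x. ennreal (f x))"
  have f: "f \<in> borel_measurable lborel"
    using assms(2) by simp
  have \<mu>_finite: "emeasure ?\<mu> A < \<infinity>" for A
    using finite_measure.emeasure_finite[OF assms(1)] by (simp add: less_top)
  have "2 * c \<le> (measure ?\<mu> {a-e..b+e} - measure ?\<mu> {a..b}) / e" if "e \<in> {0<..<d}" for e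
  proof -
    have "c * measure lborel {a-e..<a} \<le> measure ?\<mu> {a-e..<a}"
      by (rule measure_density_ge_mult[OF f _ assms(4)]) (use that assms(3,5,6) \<mu>_finite in auto)
    moreover have "c * measure lborel {b<..b+e} \<le> measure ?\<mu> {b<..b+e}"
      by (rule measure_density_ge_mult[OF f _ assms(4)]) (use that assms(3,5,6) \<mu>_finite in auto)
    ultimately have "c * e \<le> measure ?\<mu> {a-e..<a}" "c * e \<le> measure ?\<mu> {b<..b+e}"
      using that by simp_all
    then show ?thesis
      using measure_Icc_enlarge_eq_collars[OF assms(1) _ assms(6), of e] that
      by (simp add: le_divide_eq)
  qed
  then show ?thesis
    unfolding boundary_measure_def by (intro Liminf_bounded eventually_at_rightI[OF _ \<open>0 < d\<close>]) auto
qed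

lemma Gamma_measure_nonneg:
  assumes "finite_measure \<mu>" "sets \<mu> = sets borel"
  shows "0 \<le> Gamma_measure \<mu>"
  unfolding Gamma_measure_def
  using boundary_measure_nonneg[OF assms, of 0 1] by (intro SUP_upper2[of "(0, 1)"]) auto

lemma Gamma_measure_density_le:
  fixes f :: "real \<Rightarrow> real"
  assumes "finite_measure (density lborel (\<lambda>x. ennreal (f x)))" "f \<in> borel_measurable borel"
    and "AE x in lborel. f x \<le> M" "0 \<le> M"
  shows "Gamma_measure (density lborel (\<lambda>x. ennreal (f x))) \<le> ereal (2 * M)"
  unfolding Gamma_measure_def
  using boundary_measure_density_le[OF assms] by (intro SUP_least) auto

lemma Gamma_measure_density_ge:
  fixes f :: "real \<Rightarrow> real"
  assumes "finite_measure (density lborel (\<lambda>x. ennreal (f x)))" "f \<in> borel_measurable borel"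
    and "x < y" "\<And>z. z \<in> {x..y} \<Longrightarrow> c \<le> f z" "0 \<le> c"
  shows "ereal (2 * c) \<le> Gamma_measure (density lborel (\<lambda>x. ennreal (f x)))"
proof -
  define d where "d = (y - x) / 3"
  have "0 < d" "x + d < y - d"
    using \<open>x < y\<close> by (auto simp: d_def field_simps)
  have "ereal (2 * c) \<le> boundary_measure (density lborel (\<lambda>x. ennreal (f x))) (x + d) (y - d)"
    using assms(4) \<open>0 < d\<close> \<open>x + d < y - d\<close>
    by (intro boundary_measure_density_ge[OF assms(1,2) _ assms(5)]) auto
  also have "\<dots> \<le> Gamma_measure (density lborel (\<lambda>x. ennreal (f x)))"
    unfolding Gamma_measure_def using \<open>x + d < y - d\<close> \<open>0 < d\<close>
    by (intro SUP_upper2[of "(x + d, y - d)"]) auto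
  finally show ?thesis .
qed

lemma concave_on_superlevel_convex:
  fixes g :: "'a::real_vector \<Rightarrow> real"
  assumes "concave_on S g"
  shows "convex {x \<in> S. t < g x}"
proof (rule convexI)
  fix x y and u v :: real
  assume x: "x \<in> {x \<in> S. t < g x}" and y: "y \<in> {x \<in> S. t < g x}"
    and uv: "0 \<le> u" "0 \<le> v" "u + v = 1"
  have "convex_on S (\<lambda>x. - g x)"
    using assms by (simp add: concave_on_def)
  then have "- g (u *\<^sub>R x + v *\<^sub>R y) \<le> max (- g x) (- g y)"
    using x y uv by (intro convex_lower) auto
  moreover have "u *\<^sub>R x + v *\<^sub>R y \<in> S"
    using concave_on_imp_convex[OF assms] x y uv by (auto intro: convexD)
  ultimately show "u *\<^sub>R x + v *\<^sub>R y \<in> {x \<in> S. t < g x}"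
    using x y by auto
qed

lemma log_concave_fun_superlevel_convex:
  assumes "log_concave_fun f" "0 < c"
  shows "convex {x. c < f x}"
proof -
  have "convex {x \<in> {x. f x > 0}. ln c < ln (f x)}"
    using assms(1) unfolding log_concave_fun_def by (intro concave_on_superlevel_convex) simp
  moreover have "{x \<in> {x. f x > 0}. ln c < ln (f x)} = {x. c < f x}"
    using \<open>0 < c\<close> by auto
  ultimately show ?thesis
    by (simp only:)
qed

lemma convex_real_contains_interval:
  fixes S :: "real set"
  assumes "convex S" "0 < emeasure lborel S"
  shows "\<exists>x y. x < y \<and> {x..y} \<subseteq> S"
proof -
  have "\<not> countable S"
    using assms(2) emeasure_lborel_countable[of S] by auto
  then have "infinite S"
    using countable_finite by blast
  then obtain x where x: "x \<in> S"
    using infinite_imp_nonempty by blast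
  have "infinite (S - {x})"
    using \<open>infinite S\<close> by simp
  then obtain y where y: "y \<in> S" "y \<noteq> x"
    using infinite_imp_nonempty by blast
  have "closed_segment x y \<subseteq> S"
    using convex_contains_segment assms(1) x y by blast
  then show ?thesis
    using \<open>y \<noteq> x\<close> by (intro exI[of _ "min x y"] exI[of _ "max x y"])
      (auto simp: closed_segment_eq_real_ivl split: if_splits)
qed

lemma log_concave_fun_superlevel_contains_interval:
  fixes f :: "real \<Rightarrow> real"
  assumes "log_concave_fun f" "f \<in> borel_measurable borel"
    and "0 < c" "ereal c < esssup lborel (\<lambda>x. ereal (f x))"
  shows "\<exists>x y. x < y \<and> (\<forall>z\<in>{x..y}. c < f z)"
proof -
  have "0 < emeasure lborel {x \<in> space lborel. ereal c < ereal (f x)}"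
    using assms(2,4) by (intro esssup_pos_measure) auto
  then have "0 < emeasure lborel {x. c < f x}"
    by simp
  then show ?thesis
    using convex_real_contains_interval[OF log_concave_fun_superlevel_convex[OF assms(1,3)]]
    by blast
qed

lemma Gamma_measure_density_le_esssup:
  fixes f :: "real \<Rightarrow> real"
  assumes "finite_measure (density lborel (\<lambda>x. ennreal (f x)))" "f \<in> borel_measurable borel"
    and "\<And>x. 0 \<le> f x"
  shows "Gamma_measure (density lborel (\<lambda>x. ennreal (f x))) \<le> 2 * esssup lborel (\<lambda>x. ereal (f x))"
proof -
  define E where "E = esssup lborel (\<lambda>x. ereal (f x))"
  have "0 \<le> E"
    using esssup_mono[of "\<lambda>_. 0" lborel "\<lambda>x. ereal (f x)"] assms(3) by (simp add: E_def esssup_const)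
  have "Gamma_measure (density lborel (\<lambda>x. ennreal (f x))) \<le> 2 * E"
  proof (cases E)
    case (real M)
    then have "AE x in lborel. f x \<le> M"
      using esssup_AE[of "\<lambda>x. ereal (f x)" lborel] by (simp add: E_def)
    then show ?thesis
      using Gamma_measure_density_le[OF assms(1,2)] \<open>0 \<le> E\<close> real by simp
  qed (use \<open>0 \<le> E\<close> in auto)
  then show ?thesis
    by (simp add: E_def)
qed

lemma Gamma_measure_log_concave_ge_esssup:
  fixes f :: "real \<Rightarrow> real"
  assumes "finite_measure (density lborel (\<lambda>x. ennreal (f x)))" "f \<in> borel_measurable borel"
    and "log_concave_fun f"
  shows "2 * esssup lborel (\<lambda>x. ereal (f x)) \<le> Gamma_measure (density lborel (\<lambda>x. ennreal (f x)))"
proof (rule dense_le)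
  fix w assume w: "w < 2 * esssup lborel (\<lambda>x. ereal (f x))"
  show "w \<le> Gamma_measure (density lborel (\<lambda>x. ennreal (f x)))"
  proof (cases "w \<le> 0")
    case True
    then show ?thesis
      using Gamma_measure_nonneg[OF assms(1)] by simp
  next
    case False
    then obtain r where r: "w = ereal r" "0 < r" "ereal (r / 2) < esssup lborel (\<lambda>x. ereal (f x))"
      using w by (cases w; cases "esssup lborel (\<lambda>x. ereal (f x))") auto
    then obtain x y where "x < y" "\<forall>z\<in>{x..y}. r / 2 < f z"
      using log_concave_fun_superlevel_contains_interval[OF assms(3,2), of "r / 2"] by auto
    then have "ereal (2 * (r / 2)) \<le> Gamma_measure (density lborel (\<lambda>x. ennreal (f x)))"
      using \<open>0 < r\<close> by (intro Gamma_measure_density_ge[OF assms(1,2) \<open>x < y\<close>]) (auto intro: less_imp_le)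
    then show ?thesis
      using r(1) by simp
  qed
qed

theorem proposition5p8:
  fixes \<mu> :: "real measure" and f :: "real \<Rightarrow> real"
  assumes "log_concave_prob_with_density \<mu> f"
  shows "Gamma_measure \<mu> = 2 * esssup lborel (\<lambda>x. ereal (f x))"
proof -
  have lc: "log_concave_fun f" and f: "f \<in> borel_measurable borel"
    and \<mu>: "\<mu> = density lborel (\<lambda>x. ennreal (f x))" and "prob_space \<mu>"
    using assms by (auto simp: log_concave_prob_with_density_def)
  then have fin: "finite_measure (density lborel (\<lambda>x. ennreal (f x)))"
    by (simp add: prob_space_def)
  have f_nonneg: "\<And>x. 0 \<le> f x"
    using lc by (simp add: log_concave_fun_def)
  show ?thesis
    unfolding \<mu> using Gamma_measure_density_le_esssup[OF fin f f_nonneg]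
      Gamma_measure_log_concave_ge_esssup[OF fin f lc]
    by (rule antisym)
qed

end
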